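(* Let $\psi$ be a strictly convex differentiable real function and let $d_{\zeta^+}$ be the associated divergence restricted to nonzero eigenvalues (defined in the context). Then for every $A\in\mathbb{R}^{q\times p}$, $$d_{\zeta^+}(AA^\top\,\|\,I_q)=d_{\zeta^+}(A^\top A\,\|\,I_p).$$
   Context: For a strictly convex differentiable $\psi$, let $\mathrm{div}_\psi(x\|y)=\psi(x)-\psi(y)-(x-y)\psi'(y)$. For symmetric matrices $X,Y$ of the same size $m\times m$, let $\lambda_1(X)\ge\dots\ge\lambda_m(X)$ with orthonormal eigenvectors $u_1,\dots,u_m$, and $\lambda_1(Y)\ge\dots\ge\lambda_m(Y)$ with orthonormal eigenvectors $v_1,\dots,v_m$. Define $$d_{\zeta^+}(X\|Y):=\sum_{i:\lambda_i(X)\ne0}\ \sum_{j:\lambda_j(Y)\neq0}(u_i^\top v_j)^2\,\mathrm{div}_\psi\big(\lambda_i(X)\,\|\,\lambda_j(Y)\big).$$ (This is the spectral Bregman divergence induced by $\zeta(X)=\sum_i\psi(\lambda_i(X))$, restricted to nonzero eigenvalues.) *)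

theory Defs
  imports "HOL-Analysis.Analysis"
begin

definition strictly_convex :: "(real \<Rightarrow> real) \<Rightarrow> bool" where
  "strictly_convex f \<longleftrightarrow>
     (\<forall>x y t. x \<noteq> y \<and> 0 < t \<and> t < 1 \<longrightarrow>
        f (t * x + (1 - t) * y) < t * f x + (1 - t) * f y)"

definition div_psi :: "(real \<Rightarrow> real) \<Rightarrow> real \<Rightarrow> real \<Rightarrow> real" where
  "div_psi psi x y = psi x - psi y - (x - y) * deriv psi y"

definition eigdec :: "real^'n^'n \<Rightarrow> (nat \<Rightarrow> real) \<Rightarrow> (nat \<Rightarrow> real^'n) \<Rightarrow> bool" where
  "eigdec X lam u \<longleftrightarrow>
     (\<forall>i < CARD('n). X *v u i = lam i *\<^sub>R u i) \<and>
     (\<forall>i < CARD('n). \<forall>j < CARD('n). u i \<bullet> u j = (if i = j then 1 else 0)) \<and>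
     (\<forall>i j. i \<le> j \<and> j < CARD('n) \<longrightarrow> lam j \<le> lam i)"

definition d_zeta_plus ::
  "(real \<Rightarrow> real) \<Rightarrow> (nat \<Rightarrow> real) \<Rightarrow> (nat \<Rightarrow> real^'n) \<Rightarrow> (nat \<Rightarrow> real) \<Rightarrow> (nat \<Rightarrow> real^'n) \<Rightarrow> real" where
  "d_zeta_plus psi lamX u lamY v =
     (\<Sum>i\<in>{i. i < CARD('n) \<and> lamX i \<noteq> 0}. \<Sum>j\<in>{j. j < CARD('n) \<and> lamY j \<noteq> 0}.
        (u i \<bullet> v j)^2 * div_psi psi (lamX i) (lamY j))"

end

theory Submission
  imports Defs
begin

(* Against the identity, whose only eigenvalue is 1, Parseval's identity in the eigenbasis of
   the identity collapses the divergence to the sum of div_psi psi lambda 1 over the nonzero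
   eigenvalues lambda. So it suffices that A A^T and A^T A have the same nonzero eigenvalues,
   counted with multiplicity. For orthonormal eigenbases u_i of A A^T (eigenvalues lambda_i) and
   v_k of A^T A (eigenvalues mu_k), the weights c_ik = (A^T u_i . v_k)^2 vanish unless
   lambda_i = mu_k, and by Parseval the row sums are lambda_i and the column sums mu_k. Hence
   sum_i f lambda_i = sum_ik c_ik f lambda_i / lambda_i = sum_ik c_ik f mu_k / mu_k = sum_k f mu_k
   for every f. *)

lemma inner_transpose_matrix_vector:
  fixes M :: "real^'n^'m"
  shows "(transpose M *v x) \<bullet> y = x \<bullet> (M *v y)"
  by (simp add: dot_lmul_matrix)

lemma sum_inner_square_orthonormal:
  fixes u :: "'i \<Rightarrow> 'a::euclidean_space"
  assumes "finite I" and "card I = DIM('a)"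
    and orthonormal: "\<And>i j. i \<in> I \<Longrightarrow> j \<in> I \<Longrightarrow> u i \<bullet> u j = (if i = j then 1 else 0)"
  shows "(\<Sum>i\<in>I. (u i \<bullet> x)\<^sup>2) = x \<bullet> x"
proof -
  have inj: "inj_on u I"
    by (rule inj_onI) (metis orthonormal zero_neq_one)
  have "pairwise orthogonal (u ` I)"
    using orthonormal inj unfolding pairwise_def orthogonal_def inj_on_def by auto
  moreover have "0 \<notin> u ` I"
    using orthonormal by (metis imageE inner_zero_left zero_neq_one)
  ultimately have "independent (u ` I)"
    by (rule pairwise_orthogonal_independent)
  moreover have "card (u ` I) = dim (UNIV :: 'a set)"
    using assms(2) inj by (simp add: card_image)
  ultimately have "span (u ` I) = UNIV"
    using card_eq_dim[of "u ` I" UNIV] \<open>finite I\<close> by auto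
  then have "(\<Sum>b\<in>u ` I. (x \<bullet> b) *\<^sub>R b) = x"
    using \<open>pairwise orthogonal (u ` I)\<close> \<open>finite I\<close> orthonormal
    by (intro orthonormal_basis_expand) (auto simp: norm_eq_1)
  then have "x = (\<Sum>i\<in>I. (u i \<bullet> x) *\<^sub>R u i)"
    using inj by (simp add: sum.reindex inner_commute)
  then have "x \<bullet> x = x \<bullet> (\<Sum>i\<in>I. (u i \<bullet> x) *\<^sub>R u i)"
    by simp
  also have "\<dots> = (\<Sum>i\<in>I. (u i \<bullet> x)\<^sup>2)"
    by (simp add: inner_sum_right power2_eq_square inner_commute)
  finally show ?thesis ..
qed

lemma eigdec_sum_inner_square:
  fixes u :: "nat \<Rightarrow> real^'n"
  assumes "eigdec X lam u"
  shows "(\<Sum>i<CARD('n). (u i \<bullet> x)\<^sup>2) = x \<bullet> x"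
  using assms by (intro sum_inner_square_orthonormal) (auto simp: eigdec_def)

lemma eigdec_mat_1_eigenvalue:
  assumes "eigdec (mat 1 :: real^'n^'n) lam v" and "j < CARD('n)"
  shows "lam j = 1"
proof -
  have "v j = lam j *\<^sub>R v j" and "v j \<bullet> v j = 1"
    using assms unfolding eigdec_def by auto
  then have "1 = lam j * (v j \<bullet> v j)"
    by (metis inner_scaleR_left)
  with \<open>v j \<bullet> v j = 1\<close> show ?thesis
    by simp
qed

lemma d_zeta_plus_mat_1:
  fixes u v :: "nat \<Rightarrow> real^'n"
  assumes "eigdec X lam u" and "eigdec (mat 1 :: real^'n^'n) mu v"
  shows "d_zeta_plus psi lam u mu v = (\<Sum>i\<in>{i. i < CARD('n) \<and> lam i \<noteq> 0}. div_psi psi (lam i) 1)"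
proof -
  have mu: "mu j = 1" if "j < CARD('n)" for j
    using eigdec_mat_1_eigenvalue[OF assms(2) that] .
  then have nonzero: "{j. j < CARD('n) \<and> mu j \<noteq> 0} = {..<CARD('n)}"
    by auto
  have "(\<Sum>j<CARD('n). (u i \<bullet> v j)\<^sup>2 * div_psi psi (lam i) (mu j))
      = (\<Sum>j<CARD('n). (v j \<bullet> u i)\<^sup>2) * div_psi psi (lam i) 1" for i
    by (simp add: sum_distrib_right mu inner_commute)
  also have "\<dots> i = div_psi psi (lam i) 1" if "i < CARD('n)" for i
    using eigdec_sum_inner_square[OF assms(2)] assms(1) that by (simp add: eigdec_def)
  finally show ?thesis
    unfolding d_zeta_plus_def nonzero by (intro sum.cong) auto
qed

lemma symmetric_matrix_eigenvectors_orthogonal: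
  fixes M :: "real^'n^'n"
  assumes "transpose M = M" and "M *v x = a *\<^sub>R x" and "M *v y = b *\<^sub>R y" and "a \<noteq> b"
  shows "x \<bullet> y = 0"
proof -
  have "a * (x \<bullet> y) = (M *v x) \<bullet> y"
    using assms(2) by simp
  also have "\<dots> = x \<bullet> (M *v y)"
    by (metis assms(1) inner_transpose_matrix_vector)
  also have "\<dots> = b * (x \<bullet> y)"
    using assms(3) by simp
  finally show ?thesis
    using \<open>a \<noteq> b\<close> by simp
qed

lemma transpose_mult_eigenvector:
  fixes B :: "real^'p^'q"
  assumes "(B ** transpose B) *v x = a *\<^sub>R x"
  shows "(transpose B ** B) *v (transpose B *v x) = a *\<^sub>R (transpose B *v x)"
proof -
  have "(transpose B ** B) *v (transpose B *v x) = transpose B *v ((B ** transpose B) *v x)"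
    by (simp only: matrix_vector_mul_assoc matrix_mul_assoc)
  with assms show ?thesis
    by (simp add: matrix_vector_mult_scaleR)
qed

lemma eigdec_gram_weight_eq_0:
  fixes B :: "real^'p^'q" and u :: "nat \<Rightarrow> real^'q" and v :: "nat \<Rightarrow> real^'p"
  assumes "eigdec (B ** transpose B) lam u" and "eigdec (transpose B ** B) mu v"
    and "i < CARD('q)" and "k < CARD('p)" and "lam i \<noteq> mu k"
  shows "(transpose B *v u i) \<bullet> v k = 0"
proof (rule symmetric_matrix_eigenvectors_orthogonal)
  show "transpose (transpose B ** B) = transpose B ** B"
    by (simp add: matrix_transpose_mul)
  show "(transpose B ** B) *v (transpose B *v u i) = lam i *\<^sub>R (transpose B *v u i)"
    using assms(1,3) by (intro transpose_mult_eigenvector) (simp add: eigdec_def)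
  show "(transpose B ** B) *v v k = mu k *\<^sub>R v k"
    using assms(2,4) by (simp add: eigdec_def)
qed (use assms(5) in simp)

lemma eigdec_gram_weight_sum:
  fixes B :: "real^'p^'q" and u :: "nat \<Rightarrow> real^'q" and v :: "nat \<Rightarrow> real^'p"
  assumes "eigdec (B ** transpose B) lam u" and "eigdec (transpose B ** B) mu v"
    and "i < CARD('q)" and "lam i \<noteq> 0"
  shows "(\<Sum>k\<in>{k. k < CARD('p) \<and> mu k \<noteq> 0}. ((transpose B *v u i) \<bullet> v k)\<^sup>2) = lam i"
proof -
  let ?w = "transpose B *v u i"
  have "(\<Sum>k\<in>{k. k < CARD('p) \<and> mu k \<noteq> 0}. (?w \<bullet> v k)\<^sup>2) = (\<Sum>k<CARD('p). (v k \<bullet> ?w)\<^sup>2)"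
    using eigdec_gram_weight_eq_0[OF assms(1,2,3)] \<open>lam i \<noteq> 0\<close>
    by (intro sum.mono_neutral_cong_left) (auto simp: inner_commute)
  also have "\<dots> = ?w \<bullet> ?w"
    using eigdec_sum_inner_square[OF assms(2)] .
  also have "\<dots> = u i \<bullet> ((B ** transpose B) *v u i)"
    by (simp only: inner_transpose_matrix_vector matrix_vector_mul_assoc)
  also have "\<dots> = lam i"
    using assms(1,3) by (simp add: eigdec_def)
  finally show ?thesis .
qed

lemma eigdec_sum_nonzero_eigenvalues_gram_eq:
  fixes B :: "real^'p^'q" and u :: "nat \<Rightarrow> real^'q" and v :: "nat \<Rightarrow> real^'p"
    and f :: "real \<Rightarrow> 'a::real_vector"
  assumes eig_u: "eigdec (B ** transpose B) lam u" and eig_v: "eigdec (transpose B ** B) mu v"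
  shows "(\<Sum>i\<in>{i. i < CARD('q) \<and> lam i \<noteq> 0}. f (lam i)) =
    (\<Sum>k\<in>{k. k < CARD('p) \<and> mu k \<noteq> 0}. f (mu k))"
proof -
  let ?I = "{i. i < CARD('q) \<and> lam i \<noteq> 0}" and ?K = "{k. k < CARD('p) \<and> mu k \<noteq> 0}"
  define c where "c i k = ((transpose B *v u i) \<bullet> v k)\<^sup>2" for i k
  have eig_v': "eigdec (transpose B ** transpose (transpose B)) mu v"
    and eig_u': "eigdec (transpose (transpose B) ** transpose B) lam u"
    using eig_v eig_u by simp_all
  have c_transpose: "((B *v v k) \<bullet> u i)\<^sup>2 = c i k" for i k
    unfolding c_def inner_transpose_matrix_vector by (simp add: inner_commute)
  have row_sum: "(\<Sum>k\<in>?K. c i k) = lam i" if "i \<in> ?I" for i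
    using eigdec_gram_weight_sum[OF eig_u eig_v] that by (simp add: c_def)
  have column_sum: "(\<Sum>i\<in>?I. c i k) = mu k" if "k \<in> ?K" for k
    using eigdec_gram_weight_sum[OF eig_v' eig_u'] that by (simp add: c_transpose)
  have weights_vanish: "c i k = 0" if "i \<in> ?I" and "k \<in> ?K" and "lam i \<noteq> mu k" for i k
    using eigdec_gram_weight_eq_0[OF eig_u eig_v] that by (simp add: c_def)
  have "(\<Sum>i\<in>?I. f (lam i)) = (\<Sum>i\<in>?I. (\<Sum>k\<in>?K. c i k) *\<^sub>R (f (lam i) /\<^sub>R lam i))"
    using row_sum by (intro sum.cong) auto
  also have "\<dots> = (\<Sum>i\<in>?I. \<Sum>k\<in>?K. c i k *\<^sub>R (f (lam i) /\<^sub>R lam i))"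
    by (simp only: scaleR_sum_left)
  also have "\<dots> = (\<Sum>i\<in>?I. \<Sum>k\<in>?K. c i k *\<^sub>R (f (mu k) /\<^sub>R mu k))"
  proof (intro sum.cong refl)
    fix i k
    assume "i \<in> ?I" and "k \<in> ?K"
    then show "c i k *\<^sub>R (f (lam i) /\<^sub>R lam i) = c i k *\<^sub>R (f (mu k) /\<^sub>R mu k)"
      using weights_vanish by (cases "lam i = mu k") auto
  qed
  also have "\<dots> = (\<Sum>k\<in>?K. (\<Sum>i\<in>?I. c i k) *\<^sub>R (f (mu k) /\<^sub>R mu k))"
    by (subst sum.swap) (simp only: scaleR_sum_left)
  also have "\<dots> = (\<Sum>k\<in>?K. f (mu k))"
    using column_sum by (intro sum.cong) auto
  finally show ?thesis .
qed

theorem lemmaE2: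
  fixes A :: "real^'p^'q" and psi :: "real \<Rightarrow> real"
    and lam1 lam2 lam3 lam4 :: "nat \<Rightarrow> real"
    and u1 v2 :: "nat \<Rightarrow> real^'q" and u3 v4 :: "nat \<Rightarrow> real^'p"
  assumes "strictly_convex psi"
    and "\<forall>x. psi differentiable (at x)"
    and "eigdec (A ** transpose A) lam1 u1"
    and "eigdec (mat 1 :: real^'q^'q) lam2 v2"
    and "eigdec (transpose A ** A) lam3 u3"
    and "eigdec (mat 1 :: real^'p^'p) lam4 v4"
  shows "d_zeta_plus psi lam1 u1 lam2 v2 = d_zeta_plus psi lam3 u3 lam4 v4"
  using d_zeta_plus_mat_1[OF assms(3,4)] d_zeta_plus_mat_1[OF assms(5,6)]
    eigdec_sum_nonzero_eigenvalues_gram_eq[OF assms(3,5), of "\<lambda>x. div_psi psi x 1"]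
  by simp

end
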